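(* Let $f:\mathbb{R}^n\to\mathbb{R}$ be continuously differentiable with $\nabla f$ Lipschitz continuous on $\mathbb{R}^n$, let $s$ be an integer with $0<s<n$, and let $\mathbf{x}^*$ be a CW-minimum of the problem (P): minimize $f(\mathbf{x})$ subject to $\|\mathbf{x}\|_0\le s$. Then $$|\nabla_i f(\mathbf{x}^* )|\ \begin{cases}\le L_2(f)\,M_s(\mathbf{x}^* ) & i\in I_0(\mathbf{x}^* ),\\ =0 & i\in I_1(\mathbf{x}^* ),\end{cases}$$ that is, $\mathbf{x}^*$ is an $L_2(f)$-stationary point of (P).
   Context: $\|\mathbf{x}\|_0$ is the number of nonzero components; $C_s=\{\mathbf{x}:\|\mathbf{x}\|_0\le s\}$; $I_1(\mathbf{x})=\{i:x_i\neq0\}$, $I_0(\mathbf{x})=\{i:x_i=0\}$; $M_s(\mathbf{x})$ is the $s$-th largest absolute value among the components of $\mathbf{x}$; $\mathbf{e}_i$ is the $i$-th standard basis vector. A feasible $\mathbf{x}^*$ is a coordinate-wise (CW) minimum of (P) if either $\|\mathbf{x}^*\|_0<s$ and $f(\mathbf{x}^* )=\min_{t}f(\mathbf{x}^*+t\mathbf{e}_i)$ for every $i$; or $\|\mathbf{x}^*\|_0=s$ and $f(\mathbf{x}^* )\le\min_{t}f(\mathbf{x}^*-x_i^*\mathbf{e}_i+t\mathbf{e}_j)$ for all $i\in I_1(\mathbf{x}^* )$, $j=1,\dots,n$. For $i\neq j$, $\nabla_{i,j}f(\mathbf{x})\in\mathbb{R}^2$ is the vector of the $i$-th and $j$-th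 partial derivatives, and $L_{i,j}(f)$ is a constant with $\|\nabla_{i,j}f(\mathbf{x})-\nabla_{i,j}f(\mathbf{x}+\mathbf{d})\|\le L_{i,j}(f)\|\mathbf{d}\|$ for all $\mathbf{x}\in\mathbb{R}^n$ and all $\mathbf{d}\in\mathbb{R}^n$ with at most two nonzero components (such constants exist since $\nabla f$ is Lipschitz); the local Lipschitz constant is $L_2(f)=\max_{i\neq j}L_{i,j}(f)$. For $L>0$, $\mathbf{x}^*\in C_s$ is $L$-stationary if $\mathbf{x}^*\in P_{C_s}(\mathbf{x}^*-\frac1L\nabla f(\mathbf{x}^* ))$, where $P_{C_s}(\mathbf{y})=\operatorname{argmin}_{\mathbf{x}\in C_s}\|\mathbf{x}-\mathbf{y}\|^2$; equivalently, the displayed condition with $L$ in place of $L_2(f)$. *)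

theory Defs
  imports "HOL-Analysis.Analysis" "HOL-Library.Multiset"
begin

text \<open>Vectors of R^n are modelled as real^'n, n = CARD('n).\<close>

definition l0norm :: "real^'n \<Rightarrow> nat" where
  "l0norm x = card {i. x $ i \<noteq> 0}"

definition Cs :: "nat \<Rightarrow> (real^'n) set" where
  "Cs s = {x. l0norm x \<le> s}"

definition I1 :: "real^'n \<Rightarrow> 'n set" where
  "I1 x = {i. x $ i \<noteq> 0}"

definition I0 :: "real^'n \<Rightarrow> 'n set" where
  "I0 x = {i. x $ i = 0}"

text \<open>M_s(x): the s-th largest absolute value among the components of x (s \<ge> 1).\<close>
definition Ms :: "nat \<Rightarrow> real^'n \<Rightarrow> real" where
  "Ms s x = rev (sorted_list_of_multiset (image_mset (\<lambda>i. \<bar>x $ i\<bar>) (mset_set UNIV))) ! (s - 1)"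

definition CW_min :: "(real^'n \<Rightarrow> real) \<Rightarrow> nat \<Rightarrow> real^'n \<Rightarrow> bool" where
  "CW_min f s x \<longleftrightarrow> x \<in> Cs s \<and>
     ((l0norm x < s \<and> (\<forall>i t. f x \<le> f (x + t *\<^sub>R axis i 1))) \<or>
      (l0norm x = s \<and> (\<forall>i \<in> I1 x. \<forall>j t. f x \<le> f (x - (x $ i) *\<^sub>R axis i 1 + t *\<^sub>R axis j 1))))"

definition Lij :: "(real^'n \<Rightarrow> real^'n) \<Rightarrow> 'n \<Rightarrow> 'n \<Rightarrow> real" where
  "Lij g i j = Inf {L. 0 \<le> L \<and> (\<forall>x d. l0norm d \<le> 2 \<longrightarrow>
      sqrt ((g x $ i - g (x + d) $ i)\<^sup>2 + (g x $ j - g (x + d) $ j)\<^sup>2) \<le> L * norm d)}"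

definition L2 :: "(real^'n \<Rightarrow> real^'n) \<Rightarrow> real" where
  "L2 g = Max {Lij g i j | i j. i \<noteq> j}"

end

theory Submission
  imports Defs
begin

text \<open>At a CW-minimum every support coordinate is a one-dimensional minimum, so the gradient
  vanishes there. If the support is full (size s), swapping a support coordinate j with an
  off-support coordinate i must not decrease f; the descent lemma along the two-coordinate
  direction, with constant L_{i,j}, turns this into
  t \<nabla>_i f + L/2 (t^2 + x_j^2) \<ge> 0 for all t, i.e. |\<nabla>_i f| \<le> L |x_j|.
  Choosing the smallest nonzero |x_j|, which is M_s(x), gives the bound.\<close>

lemma sorted_nth_from_end_gt:
  fixes xs :: "'a::linorder list"
  assumes "sorted xs" "0 < k" "k \<le> length (filter (\<lambda>v. a < v) xs)"
  shows "a < xs ! (length xs - k)"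
proof (rule ccontr)
  assume "\<not> a < xs ! (length xs - k)"
  let ?m = "length xs - k + 1"
  have k_le: "k \<le> length xs" using assms(3) length_filter_le order_trans by blast
  have "\<not> a < v" if v: "v \<in> set (take ?m xs)" for v
  proof -
    obtain p where "p < length (take ?m xs)" "v = take ?m xs ! p"
      using v unfolding in_set_conv_nth by blast
    hence "v \<le> xs ! (length xs - k)"
      using sorted_nth_mono[OF assms(1)] assms(2) k_le by auto
    thus ?thesis using \<open>\<not> a < xs ! (length xs - k)\<close> by simp
  qed
  hence "filter (\<lambda>v. a < v) (take ?m xs) = []" by (simp add: filter_empty_conv)
  hence "filter (\<lambda>v. a < v) xs = filter (\<lambda>v. a < v) (drop ?m xs)"
    by (metis append_take_drop_id filter_append append_Nil)
  hence "k \<le> length (filter (\<lambda>v. a < v) (drop ?m xs))" using assms(3) by simp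
  also have "\<dots> \<le> length (drop ?m xs)" by (rule length_filter_le)
  finally show False using assms(2) k_le by simp
qed

lemma length_sorted_abs_components:
  fixes x :: "real^'n"
  shows "length (sorted_list_of_multiset (image_mset (\<lambda>i. \<bar>x $ i\<bar>) (mset_set UNIV))) = CARD('n)"
  by (metis card_UNIV_def mset_sorted_list_of_multiset size_image_mset size_mset size_mset_set)

lemma l0norm_le_card: "l0norm (x :: real^'n) \<le> CARD('n)"
  unfolding l0norm_def by (rule card_mono) auto

lemma Ms_conv_nth:
  fixes x :: "real^'n"
  assumes "0 < s" "s \<le> CARD('n)"
  shows "Ms s x = sorted_list_of_multiset (image_mset (\<lambda>i. \<bar>x $ i\<bar>) (mset_set UNIV)) ! (CARD('n) - s)"
  using assms length_sorted_abs_components[of x] by (simp add: Ms_def rev_nth Suc_diff_le)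

lemma Ms_in_range:
  fixes x :: "real^'n"
  assumes "0 < s" "s \<le> CARD('n)"
  shows "Ms s x \<in> range (\<lambda>i. \<bar>x $ i\<bar>)"
proof -
  let ?xs = "sorted_list_of_multiset (image_mset (\<lambda>i. \<bar>x $ i\<bar>) (mset_set (UNIV::'n set)))"
  have "?xs ! (CARD('n) - s) \<in> set ?xs"
    using assms(1) length_sorted_abs_components[of x] by (intro nth_mem) simp
  thus ?thesis using Ms_conv_nth[OF assms] by simp
qed

lemma Ms_nonneg:
  fixes x :: "real^'n"
  assumes "0 < s" "s \<le> CARD('n)"
  shows "0 \<le> Ms s x"
  using Ms_in_range[OF assms, of x] by auto

lemma Ms_pos:
  fixes x :: "real^'n"
  assumes "0 < s" "s \<le> l0norm x"
  shows "0 < Ms s x"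
proof -
  let ?xs = "sorted_list_of_multiset (image_mset (\<lambda>i. \<bar>x $ i\<bar>) (mset_set (UNIV::'n set)))"
  have "length (filter (\<lambda>v. 0 < v) ?xs) = size (filter_mset (\<lambda>v. 0 < v) (mset ?xs))"
    by (metis mset_filter size_mset)
  also have "\<dots> = card {i. x $ i \<noteq> 0}"
    by (simp add: filter_mset_image_mset filter_mset_mset_set)
  finally have count: "length (filter (\<lambda>v. 0 < v) ?xs) = l0norm x"
    by (simp add: l0norm_def)
  have "s \<le> CARD('n)" using assms(2) l0norm_le_card[of x] by linarith
  thus ?thesis
    using sorted_nth_from_end_gt[of ?xs s 0] assms count length_sorted_abs_components[of x]
      Ms_conv_nth[of s x] by simp
qed

lemma Ms_le_nonzero_component:
  fixes x :: "real^'n"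
  assumes "0 < s" "s \<le> l0norm x"
  obtains j where "x $ j \<noteq> 0" "\<bar>x $ j\<bar> \<le> Ms s x"
proof -
  have "s \<le> CARD('n)" using assms(2) l0norm_le_card[of x] by linarith
  then obtain j where "Ms s x = \<bar>x $ j\<bar>" using Ms_in_range[OF assms(1)] by blast
  thus ?thesis using that Ms_pos[OF assms] by force
qed

definition pair_lipschitz_bound :: "(real^'n \<Rightarrow> real^'n) \<Rightarrow> 'n \<Rightarrow> 'n \<Rightarrow> real \<Rightarrow> bool" where
  "pair_lipschitz_bound g i j L \<longleftrightarrow> 0 \<le> L \<and> (\<forall>x d. l0norm d \<le> 2 \<longrightarrow>
      sqrt ((g x $ i - g (x + d) $ i)\<^sup>2 + (g x $ j - g (x + d) $ j)\<^sup>2) \<le> L * norm d)"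

lemma Lij_eq_Inf: "Lij g i j = Inf (Collect (pair_lipschitz_bound g i j))"
  by (simp add: Lij_def pair_lipschitz_bound_def[abs_def])

lemma sum_squares_two_components_le:
  fixes v :: "real^'n"
  assumes "i \<noteq> j"
  shows "(v $ i)\<^sup>2 + (v $ j)\<^sup>2 \<le> (norm v)\<^sup>2"
proof -
  have "(v $ i)\<^sup>2 + (v $ j)\<^sup>2 = (\<Sum>k\<in>{i,j}. (v $ k)\<^sup>2)" using assms by simp
  also have "\<dots> \<le> (\<Sum>k\<in>UNIV. (v $ k)\<^sup>2)" by (rule sum_mono2) auto
  also have "\<dots> = v \<bullet> v" by (simp add: inner_vec_def power2_eq_square)
  also have "\<dots> = (norm v)\<^sup>2" by (simp add: power2_norm_eq_inner)
  finally show ?thesis .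
qed

lemma pair_lipschitz_bound_of_lipschitz:
  fixes g :: "real^'n \<Rightarrow> real^'n"
  assumes lip: "\<And>y z. norm (g y - g z) \<le> K * norm (y - z)" and "i \<noteq> j"
  shows "pair_lipschitz_bound g i j (max K 0)"
  unfolding pair_lipschitz_bound_def
proof (intro conjI allI impI)
  fix x d :: "real^'n"
  have "sqrt ((g x $ i - g (x + d) $ i)\<^sup>2 + (g x $ j - g (x + d) $ j)\<^sup>2) \<le> sqrt ((norm (g x - g (x + d)))\<^sup>2)"
    using sum_squares_two_components_le[OF \<open>i \<noteq> j\<close>, of "g x - g (x + d)"]
    by (intro real_sqrt_le_mono) simp
  also have "\<dots> = norm (g x - g (x + d))" by simp
  also have "\<dots> \<le> K * norm (x - (x + d))" by (rule lip)
  also have "\<dots> \<le> max K 0 * norm d" by (simp add: mult_right_mono)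
  finally show "sqrt ((g x $ i - g (x + d) $ i)\<^sup>2 + (g x $ j - g (x + d) $ j)\<^sup>2) \<le> max K 0 * norm d" .
qed simp

lemma Lij_nonneg:
  assumes "\<And>y z. norm (g y - g z) \<le> K * norm (y - z)" "i \<noteq> j"
  shows "0 \<le> Lij g i j"
  unfolding Lij_eq_Inf
proof (rule cInf_greatest)
  show "Collect (pair_lipschitz_bound g i j) \<noteq> {}"
    using pair_lipschitz_bound_of_lipschitz[OF assms] by blast
qed (simp add: pair_lipschitz_bound_def)

lemma Lij_le_L2:
  assumes "i \<noteq> j"
  shows "Lij g i j \<le> L2 g"
proof -
  have "{Lij g i j |i j. i \<noteq> j} \<subseteq> (\<lambda>(i, j). Lij g i j) ` UNIV" by auto
  hence "finite {Lij g i j |i j. i \<noteq> j}" by (rule finite_subset) simp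
  thus ?thesis unfolding L2_def by (rule Max_ge) (use assms in auto)
qed

lemma L2_nonneg:
  fixes g :: "real^'n \<Rightarrow> real^'n"
  assumes "\<And>y z. norm (g y - g z) \<le> K * norm (y - z)" "2 \<le> CARD('n)"
  shows "0 \<le> L2 g"
proof -
  have "\<not> CARD('n) \<le> Suc 0" using assms(2) by simp
  then obtain i j :: 'n where "i \<noteq> j" using card_le_Suc0_iff_eq[of "UNIV :: 'n set"] by auto
  thus ?thesis using Lij_nonneg[OF assms(1)] Lij_le_L2 order_trans by blast
qed

lemma inner_axis_diff: "v \<bullet> (t *\<^sub>R axis i 1 - c *\<^sub>R axis j 1) = t * v $ i - c * v $ j"
  for v :: "real^'n::finite"
  by (simp add: inner_diff_right inner_axis)

lemma norm_axis_diff: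
  fixes i j :: "'n::finite"
  assumes "i \<noteq> j"
  shows "norm (t *\<^sub>R axis i (1::real) - c *\<^sub>R axis j 1) = sqrt (t\<^sup>2 + c\<^sup>2)"
  using assms
  by (simp add: norm_eq_sqrt_inner inner_diff_left inner_diff_right inner_axis_axis power2_eq_square)

lemma l0norm_axis_diff_le: "l0norm (t *\<^sub>R axis i (1::real) - c *\<^sub>R axis j 1) \<le> 2"
proof -
  have "l0norm (t *\<^sub>R axis i (1::real) - c *\<^sub>R axis j 1) \<le> card {i, j}"
    unfolding l0norm_def by (rule card_mono) (auto simp: axis_def split: if_splits)
  also have "\<dots> \<le> 2" by (simp add: card_insert_if)
  finally show ?thesis .
qed

lemma diff_mult_le_sqrt_sum_squares:
  fixes t a c b :: real
  shows "t * a - c * b \<le> sqrt (a\<^sup>2 + b\<^sup>2) * sqrt (t\<^sup>2 + c\<^sup>2)"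
proof -
  have "(a\<^sup>2 + b\<^sup>2) * (t\<^sup>2 + c\<^sup>2) = (t * a - c * b)\<^sup>2 + (t * b + c * a)\<^sup>2"
    by (simp add: power2_eq_square algebra_simps)
  hence "sqrt ((t * a - c * b)\<^sup>2) \<le> sqrt ((a\<^sup>2 + b\<^sup>2) * (t\<^sup>2 + c\<^sup>2))"
    by (intro real_sqrt_le_mono) simp
  thus ?thesis by (simp add: real_sqrt_mult)
qed

lemma pair_lipschitz_bound_inner:
  assumes "pair_lipschitz_bound g i j L" "l0norm e \<le> 2"
  shows "(g (x + e) - g x) \<bullet> (t *\<^sub>R axis i 1 - c *\<^sub>R axis j 1) \<le> L * norm e * sqrt (t\<^sup>2 + c\<^sup>2)"
proof -
  define a where "a = g (x + e) $ i - g x $ i"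
  define b where "b = g (x + e) $ j - g x $ j"
  have "sqrt (a\<^sup>2 + b\<^sup>2) \<le> L * norm e"
    using assms unfolding pair_lipschitz_bound_def a_def b_def by (simp add: power2_commute)
  hence "sqrt (a\<^sup>2 + b\<^sup>2) * sqrt (t\<^sup>2 + c\<^sup>2) \<le> L * norm e * sqrt (t\<^sup>2 + c\<^sup>2)"
    by (rule mult_right_mono) simp
  moreover have "(g (x + e) - g x) \<bullet> (t *\<^sub>R axis i 1 - c *\<^sub>R axis j 1) = t * a - c * b"
    unfolding inner_axis_diff a_def b_def by (simp add: algebra_simps)
  ultimately show ?thesis using diff_mult_le_sqrt_sum_squares[of t a c b] by linarith
qed

lemma has_real_derivative_along_line:
  assumes "\<And>y. (f has_derivative (\<lambda>h. g y \<bullet> h)) (at y)"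
  shows "((\<lambda>\<tau>. f (x + \<tau> *\<^sub>R d)) has_real_derivative (g (x + \<tau> *\<^sub>R d) \<bullet> d)) (at \<tau>)"
proof -
  have "((\<lambda>\<tau>. x + \<tau> *\<^sub>R d) has_derivative (\<lambda>h. h *\<^sub>R d)) (at \<tau>)"
    by (auto intro!: derivative_eq_intros)
  from has_derivative_compose[OF this assms]
  have "((\<lambda>\<tau>. f (x + \<tau> *\<^sub>R d)) has_derivative (\<lambda>h. g (x + \<tau> *\<^sub>R d) \<bullet> (h *\<^sub>R d))) (at \<tau>)"
    by (simp add: o_def)
  moreover have "(\<lambda>h. g (x + \<tau> *\<^sub>R d) \<bullet> (h *\<^sub>R d)) = (*) (g (x + \<tau> *\<^sub>R d) \<bullet> d)"
    by (auto simp: mult.commute)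
  ultimately show ?thesis by (simp add: has_field_derivative_def)
qed

lemma gradient_component_zero_if_line_min:
  fixes f :: "real^'n \<Rightarrow> real"
  assumes "\<And>y. (f has_derivative (\<lambda>h. g y \<bullet> h)) (at y)"
    and "\<And>t. f x \<le> f (x + t *\<^sub>R axis i 1)"
  shows "g x $ i = 0"
proof -
  have "((\<lambda>\<tau>. f (x + \<tau> *\<^sub>R axis i 1)) has_real_derivative (g x $ i)) (at 0)"
    using has_real_derivative_along_line[OF assms(1), of x "axis i 1" 0] by (simp add: inner_axis)
  thus ?thesis by (rule DERIV_local_min[of _ _ _ 1]) (use assms(2) in auto)
qed

lemma descent_lemma_two_coords:
  fixes f :: "real^'n \<Rightarrow> real"
  assumes grad: "\<And>y. (f has_derivative (\<lambda>h. g y \<bullet> h)) (at y)"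
    and "i \<noteq> j" and L: "pair_lipschitz_bound g i j L"
  shows "f (x + (t *\<^sub>R axis i 1 - c *\<^sub>R axis j 1))
           \<le> f x + (t * g x $ i - c * g x $ j) + L / 2 * (t\<^sup>2 + c\<^sup>2)"
proof -
  define d where "d = t *\<^sub>R axis i (1::real) - c *\<^sub>R axis j 1"
  define \<phi> where "\<phi> \<tau> = f (x + \<tau> *\<^sub>R d) - \<tau> * (g x \<bullet> d) - L / 2 * \<tau>\<^sup>2 * (t\<^sup>2 + c\<^sup>2)" for \<tau>
  have nd: "norm d = sqrt (t\<^sup>2 + c\<^sup>2)" using norm_axis_diff[OF \<open>i \<noteq> j\<close>] by (simp add: d_def)
  have "\<phi> 1 \<le> \<phi> 0"
  proof (rule DERIV_nonpos_imp_nonincreasing[of 0 1])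
    fix \<tau> :: real assume "0 \<le> \<tau>" "\<tau> \<le> 1"
    have D: "(\<phi> has_real_derivative (g (x + \<tau> *\<^sub>R d) \<bullet> d - g x \<bullet> d - L * \<tau> * (t\<^sup>2 + c\<^sup>2))) (at \<tau>)"
      unfolding \<phi>_def
      by (rule has_real_derivative_along_line[OF grad] derivative_eq_intros refl
          | simp add: power2_eq_square)+
    have "l0norm (\<tau> *\<^sub>R d) \<le> 2"
      using l0norm_axis_diff_le[of "\<tau> * t" i "\<tau> * c" j] by (simp add: d_def algebra_simps)
    hence "(g (x + \<tau> *\<^sub>R d) - g x) \<bullet> d \<le> L * norm (\<tau> *\<^sub>R d) * sqrt (t\<^sup>2 + c\<^sup>2)"
      unfolding d_def by (rule pair_lipschitz_bound_inner[OF L])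
    also have "\<dots> = L * \<tau> * (sqrt (t\<^sup>2 + c\<^sup>2) * sqrt (t\<^sup>2 + c\<^sup>2))"
      using \<open>0 \<le> \<tau>\<close> nd by (simp add: mult.assoc)
    also have "\<dots> = L * \<tau> * (t\<^sup>2 + c\<^sup>2)" by simp
    finally have "g (x + \<tau> *\<^sub>R d) \<bullet> d - g x \<bullet> d - L * \<tau> * (t\<^sup>2 + c\<^sup>2) \<le> 0"
      by (simp add: inner_diff_left)
    with D show "\<exists>y. (\<phi> has_real_derivative y) (at \<tau>) \<and> y \<le> 0" by blast
  qed simp
  thus ?thesis by (simp add: \<phi>_def d_def[symmetric]) (simp add: d_def inner_axis_diff)
qed

lemma abs_le_if_quadratic_nonneg:
  fixes a c L :: real
  assumes "0 \<le> L" and H: "\<And>t. 0 \<le> t * a + L / 2 * (t\<^sup>2 + c\<^sup>2)"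
  shows "\<bar>a\<bar> \<le> L * \<bar>c\<bar>"
proof (cases "L = 0")
  case True
  with H[of "-a"] have "a\<^sup>2 \<le> 0" by (simp add: power2_eq_square)
  thus ?thesis using True by simp
next
  case False
  with \<open>0 \<le> L\<close> have "0 < L" by simp
  \<comment> \<open>evaluate at the minimiser t = -a/L\<close>
  have "0 \<le> (-a / L) * a + L / 2 * ((-a / L)\<^sup>2 + c\<^sup>2)" by (rule H)
  hence "0 \<le> L * ((-a / L) * a + L / 2 * ((-a / L)\<^sup>2 + c\<^sup>2))" using \<open>0 < L\<close> by simp
  also have "\<dots> = ((L * \<bar>c\<bar>)\<^sup>2 - \<bar>a\<bar>\<^sup>2) / 2"
    using \<open>0 < L\<close> by (simp add: field_simps power2_eq_square)
  finally have "\<bar>a\<bar>\<^sup>2 \<le> (L * \<bar>c\<bar>)\<^sup>2" by simp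
  thus ?thesis by (rule power2_le_imp_le) (use \<open>0 \<le> L\<close> in simp)
qed

lemma CW_min_gradient_support:
  fixes f :: "real^'n \<Rightarrow> real"
  assumes grad: "\<And>y. (f has_derivative (\<lambda>h. g y \<bullet> h)) (at y)"
    and cw: "CW_min f s x" and i: "i \<in> I1 x \<or> l0norm x < s"
  shows "g x $ i = 0"
proof (rule gradient_component_zero_if_line_min[OF grad])
  fix u
  show "f x \<le> f (x + u *\<^sub>R axis i 1)"
  proof (cases "l0norm x < s")
    case True
    thus ?thesis using cw by (auto simp: CW_min_def)
  next
    case False
    hence "i \<in> I1 x" "\<forall>j t. f x \<le> f (x - (x $ i) *\<^sub>R axis i 1 + t *\<^sub>R axis j 1)"
      using cw i by (auto simp: CW_min_def)
    moreover have "x + u *\<^sub>R axis i 1 = x - (x $ i) *\<^sub>R axis i 1 + (u + x $ i) *\<^sub>R axis i 1"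
      by (simp add: algebra_simps scaleR_add_left)
    ultimately show ?thesis by metis
  qed
qed

lemma CW_min_gradient_off_support:
  fixes f :: "real^'n \<Rightarrow> real"
  assumes grad: "\<And>y. (f has_derivative (\<lambda>h. g y \<bullet> h)) (at y)"
    and lip: "\<And>y z. norm (g y - g z) \<le> K * norm (y - z)"
    and cw: "CW_min f s x" and full: "l0norm x = s"
    and i: "i \<in> I0 x" and j: "j \<in> I1 x"
  shows "\<bar>g x $ i\<bar> \<le> Lij g i j * \<bar>x $ j\<bar>"
proof -
  have "i \<noteq> j" "0 < \<bar>x $ j\<bar>" using i j by (auto simp: I0_def I1_def)
  have gj: "g x $ j = 0" using CW_min_gradient_support[OF grad cw] j by blast
  have swap: "\<forall>t. f x \<le> f (x - (x $ j) *\<^sub>R axis j 1 + t *\<^sub>R axis i 1)"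
    using cw full j by (auto simp: CW_min_def)
  have "\<bar>g x $ i\<bar> / \<bar>x $ j\<bar> \<le> Lij g i j"
    unfolding Lij_eq_Inf
  proof (rule cInf_greatest)
    show "Collect (pair_lipschitz_bound g i j) \<noteq> {}"
      using pair_lipschitz_bound_of_lipschitz[OF lip \<open>i \<noteq> j\<close>] by blast
    fix L assume L: "L \<in> Collect (pair_lipschitz_bound g i j)"
    have "\<bar>g x $ i\<bar> \<le> L * \<bar>x $ j\<bar>"
    proof (rule abs_le_if_quadratic_nonneg)
      show "0 \<le> L" using L by (simp add: pair_lipschitz_bound_def)
      fix t
      have "f x \<le> f (x + (t *\<^sub>R axis i 1 - x $ j *\<^sub>R axis j 1))"
        using swap by (metis add_diff_eq diff_add_eq)
      also have "\<dots> \<le> f x + (t * g x $ i - x $ j * g x $ j) + L / 2 * (t\<^sup>2 + (x $ j)\<^sup>2)"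
        using descent_lemma_two_coords[OF grad \<open>i \<noteq> j\<close>] L by blast
      finally show "0 \<le> t * g x $ i + L / 2 * (t\<^sup>2 + (x $ j)\<^sup>2)" using gj by simp
    qed
    thus "\<bar>g x $ i\<bar> / \<bar>x $ j\<bar> \<le> L" using \<open>0 < \<bar>x $ j\<bar>\<close> by (simp add: divide_le_eq)
  qed
  thus ?thesis using \<open>0 < \<bar>x $ j\<bar>\<close> by (simp add: divide_le_eq)
qed

theorem theorem2p4:
  fixes f :: "real^'n \<Rightarrow> real" and g :: "real^'n \<Rightarrow> real^'n"
    and s :: nat and x :: "real^'n" and K :: real
  assumes grad: "\<And>y. (f has_derivative (\<lambda>h. g y \<bullet> h)) (at y)"
    and cont: "continuous_on UNIV g"
    and lip: "\<And>y z. norm (g y - g z) \<le> K * norm (y - z)"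
    and s_pos: "0 < s" and s_lt: "s < CARD('n)"
    and cw: "CW_min f s x"
  shows "\<forall>i. (i \<in> I0 x \<longrightarrow> \<bar>g x $ i\<bar> \<le> L2 g * Ms s x) \<and>
             (i \<in> I1 x \<longrightarrow> g x $ i = 0)"
proof (intro allI conjI impI)
  fix i
  show "g x $ i = 0" if "i \<in> I1 x" using CW_min_gradient_support[OF grad cw] that by blast
  assume i: "i \<in> I0 x"
  have L2: "0 \<le> L2 g" using L2_nonneg[OF lip] s_pos s_lt by simp
  have Ms: "0 \<le> Ms s x" using Ms_nonneg[OF s_pos, of x] s_lt by simp
  show "\<bar>g x $ i\<bar> \<le> L2 g * Ms s x"
  proof (cases "l0norm x < s")
    case True
    thus ?thesis using CW_min_gradient_support[OF grad cw] L2 Ms by simp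
  next
    case False
    hence full: "l0norm x = s" using cw by (auto simp: CW_min_def Cs_def)
    obtain j where j: "x $ j \<noteq> 0" "\<bar>x $ j\<bar> \<le> Ms s x"
      using Ms_le_nonzero_component[OF s_pos] full by auto
    hence "j \<in> I1 x" "i \<noteq> j" using i by (auto simp: I0_def I1_def)
    have "\<bar>g x $ i\<bar> \<le> Lij g i j * \<bar>x $ j\<bar>"
      by (rule CW_min_gradient_off_support[OF grad lip cw full i \<open>j \<in> I1 x\<close>])
    also have "\<dots> \<le> L2 g * Ms s x"
      by (rule mult_mono[OF Lij_le_L2[OF \<open>i \<noteq> j\<close>] j(2) L2]) simp
    finally show ?thesis .
  qed
qed

end
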